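(* Let $(X,\sigma_X)$, $(Y,\sigma_Y)$ be one-sided subshifts, $\pi:X\to Y$ a one-block factor map, $X$ with the specification property, and $\mathcal F=\{\log f_n\}$ an almost additive potential on $X$ with bounded variation. For $i_1\cdots i_n\in B_n(Y)$ let $a_{i_1\cdots i_n}=\tilde g_n(y)$ for $y\in[i_1\cdots i_n]$ (well defined since $\tilde g_n$ depends only on $y_1,\dots,y_n$), and $S_n=\sum_{i_1\cdots i_n\in B_n(Y)}a_{i_1\cdots i_n}$. Then there exist $K_1,K_2>0$ such that $K_1\le e^{nP_Y(\tilde{\mathcal G})}/S_n\le K_2$ for all $n\in\mathbb N$.
   Context: Subshifts: one-sided closed shift-invariant subsets of $\{1,\dots,k\}^{\mathbb N}$; $B_n(Y)$ allowed words of length $n$. Specification: $\exists p>0$ such that for all allowable $u,v$ there is $w$ of length $p$ with $uwv$ allowable. Factor map: continuous surjection commuting with shifts, one-block. Almost additive: $\exists C>0$, $e^{-C}f_n(x)f_m(\sigma^nx)\le f_{n+m}(x)\le e^Cf_n(x)f_m(\sigma^nx)$; bounded variation: $\sup_n\sup\{f_n(x)/f_n(x'):x_i=x'_i,1\le i\le n\}<\infty$. $E_n(y)$: any set with exactly one point from each cylinder $[x_1\cdots x_n]$ of $X$ with $\pi([x_1\cdots x_n])\subseteq[y_1\cdots y_n]$; $g_n(y)=\sup_{E_n(y)}\sum_{x\in E_n(y)}f_n(x)$; $\tilde g_n=g_ne^{-nP_X(\mathcal F)}$; $\tilde{\mathcal G}=\{\log\tilde g_n\}$; $P_Y(\tilde{\mathcal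 G})=\lim_{\epsilon\to0}\limsup_n\frac1n\log\sup_E\sum_{y\in E}\tilde g_n(y)$ over $(n,\epsilon)$-separated sets. *)

theory Defs
  imports "HOL-Analysis.Analysis" "HOL-Library.Liminf_Limsup" "HOL-Library.Extended_Real"
begin

text \<open>Points of the full shift are sequences nat => nat; coordinate x_(i+1) of the paper is x i.\<close>

definition shift :: "(nat \<Rightarrow> nat) \<Rightarrow> (nat \<Rightarrow> nat)" where
  "shift x = (\<lambda>i. x (Suc i))"

definition subshift :: "nat \<Rightarrow> (nat \<Rightarrow> nat) set \<Rightarrow> bool" where
  "subshift k X \<longleftrightarrow> X \<noteq> {} \<and> X \<subseteq> {x. \<forall>i. x i \<in> {1..k}} \<and> closed X \<and> shift ` X \<subseteq> X"

definition cyl :: "nat list \<Rightarrow> (nat \<Rightarrow> nat) set" where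
  "cyl w = {x. \<forall>i<length w. x i = w ! i}"

definition word :: "nat \<Rightarrow> (nat \<Rightarrow> nat) \<Rightarrow> nat list" where
  "word n x = map x [0..<n]"

definition Bn :: "nat \<Rightarrow> (nat \<Rightarrow> nat) set \<Rightarrow> nat list set" where
  "Bn n X = {word n x | x. x \<in> X}"

definition language :: "(nat \<Rightarrow> nat) set \<Rightarrow> nat list set" where
  "language X = (\<Union>n. Bn n X)"

definition has_specification :: "(nat \<Rightarrow> nat) set \<Rightarrow> bool" where
  "has_specification X \<longleftrightarrow> (\<exists>p>0. \<forall>u \<in> language X. \<forall>v \<in> language X.
      u \<noteq> [] \<longrightarrow> v \<noteq> [] \<longrightarrow> (\<exists>w. length w = p \<and> u @ w @ v \<in> language X))"

definition one_block_factor ::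
  "(nat \<Rightarrow> nat) set \<Rightarrow> (nat \<Rightarrow> nat) set \<Rightarrow> ((nat \<Rightarrow> nat) \<Rightarrow> (nat \<Rightarrow> nat)) \<Rightarrow> bool" where
  "one_block_factor X Y \<pi> \<longleftrightarrow> continuous_on X \<pi> \<and> \<pi> ` X = Y \<and>
      (\<forall>x\<in>X. \<pi> (shift x) = shift (\<pi> x)) \<and> (\<exists>\<phi>. \<forall>x\<in>X. \<pi> x = \<phi> \<circ> x)"

definition almost_additive :: "(nat \<Rightarrow> nat) set \<Rightarrow> (nat \<Rightarrow> (nat \<Rightarrow> nat) \<Rightarrow> real) \<Rightarrow> bool" where
  "almost_additive X f \<longleftrightarrow> (\<forall>n\<ge>1. \<forall>x\<in>X. f n x > 0) \<and>
     (\<exists>C>0. \<forall>n\<ge>1. \<forall>m\<ge>1. \<forall>x\<in>X.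
        exp (-C) * f n x * f m ((shift ^^ n) x) \<le> f (n + m) x \<and>
        f (n + m) x \<le> exp C * f n x * f m ((shift ^^ n) x))"

definition bounded_variation :: "(nat \<Rightarrow> nat) set \<Rightarrow> (nat \<Rightarrow> (nat \<Rightarrow> nat) \<Rightarrow> real) \<Rightarrow> bool" where
  "bounded_variation X f \<longleftrightarrow> (\<exists>M. \<forall>n\<ge>1. \<forall>x\<in>X. \<forall>x'\<in>X.
      (\<forall>i<n. x i = x' i) \<longrightarrow> f n x \<le> M * f n x')"

definition seqdist :: "(nat \<Rightarrow> nat) \<Rightarrow> (nat \<Rightarrow> nat) \<Rightarrow> real" where
  "seqdist x y = (if x = y then 0 else (1/2) ^ (LEAST i. x i \<noteq> y i))"

definition separated :: "(nat \<Rightarrow> nat) set \<Rightarrow> nat \<Rightarrow> real \<Rightarrow> (nat \<Rightarrow> nat) set \<Rightarrow> bool" where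
  "separated X n \<epsilon> E \<longleftrightarrow> finite E \<and> E \<subseteq> X \<and>
     (\<forall>x\<in>E. \<forall>y\<in>E. x \<noteq> y \<longrightarrow> (\<exists>i<n. seqdist ((shift ^^ i) x) ((shift ^^ i) y) > \<epsilon>))"

text \<open>Topological pressure of the sequence of potentials {log g_n} on X, via (n,eps)-separated sets.\<close>
definition pressure :: "(nat \<Rightarrow> nat) set \<Rightarrow> (nat \<Rightarrow> (nat \<Rightarrow> nat) \<Rightarrow> real) \<Rightarrow> real" where
  "pressure X g = real_of_ereal (Lim (at_right 0) (\<lambda>\<epsilon>::real.
     limsup (\<lambda>n. ereal (ln (SUP E \<in> {E. separated X n \<epsilon> E}. (\<Sum>x\<in>E. g n x)) / real n))))"

definition En_sets :: "(nat \<Rightarrow> nat) set \<Rightarrow> ((nat \<Rightarrow> nat) \<Rightarrow> (nat \<Rightarrow> nat)) \<Rightarrow> nat \<Rightarrow> (nat \<Rightarrow> nat)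
     \<Rightarrow> (nat \<Rightarrow> nat) set set" where
  "En_sets X \<pi> n y = {E. E \<subseteq> (\<Union>w \<in> {w \<in> Bn n X. \<pi> ` (X \<inter> cyl w) \<subseteq> cyl (word n y)}. X \<inter> cyl w) \<and>
      (\<forall>w \<in> Bn n X. \<pi> ` (X \<inter> cyl w) \<subseteq> cyl (word n y) \<longrightarrow> card (E \<inter> cyl w) = 1)}"

definition gfun :: "(nat \<Rightarrow> nat) set \<Rightarrow> ((nat \<Rightarrow> nat) \<Rightarrow> (nat \<Rightarrow> nat)) \<Rightarrow> (nat \<Rightarrow> (nat \<Rightarrow> nat) \<Rightarrow> real)
     \<Rightarrow> nat \<Rightarrow> (nat \<Rightarrow> nat) \<Rightarrow> real" where
  "gfun X \<pi> f n y = (SUP E \<in> En_sets X \<pi> n y. (\<Sum>x\<in>E. f n x))"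

definition gtilde :: "(nat \<Rightarrow> nat) set \<Rightarrow> ((nat \<Rightarrow> nat) \<Rightarrow> (nat \<Rightarrow> nat)) \<Rightarrow> (nat \<Rightarrow> (nat \<Rightarrow> nat) \<Rightarrow> real)
     \<Rightarrow> nat \<Rightarrow> (nat \<Rightarrow> nat) \<Rightarrow> real" where
  "gtilde X \<pi> f n y = gfun X \<pi> f n y * exp (- real n * pressure X f)"

definition coef_a :: "(nat \<Rightarrow> nat) set \<Rightarrow> (nat \<Rightarrow> nat) set \<Rightarrow> ((nat \<Rightarrow> nat) \<Rightarrow> (nat \<Rightarrow> nat)) \<Rightarrow> (nat \<Rightarrow> (nat \<Rightarrow> nat) \<Rightarrow> real) \<Rightarrow> nat list \<Rightarrow> real" where
  "coef_a X Y \<pi> f w = gtilde X \<pi> f (length w) (SOME y. y \<in> Y \<and> y \<in> cyl w)"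

definition S_sum :: "(nat \<Rightarrow> nat) set \<Rightarrow> (nat \<Rightarrow> nat) set \<Rightarrow> ((nat \<Rightarrow> nat) \<Rightarrow> (nat \<Rightarrow> nat)) \<Rightarrow> (nat \<Rightarrow> (nat \<Rightarrow> nat) \<Rightarrow> real) \<Rightarrow> nat \<Rightarrow> real" where
  "S_sum X Y \<pi> f n = (\<Sum>w \<in> Bn n Y. coef_a X Y \<pi> f w)"

end

theory Submission
  imports Defs
begin

(* Let Z_n be the sum, over the words u of length n of X, of f_n at one point of the cylinder [u].
   Bounded variation makes g_n(y) comparable to the part of Z_n coming from the words mapped onto
   y_1...y_n, so S_n is comparable to exp(-n P_X(F)) Z_n. Almost additivity gives
   Z_(n+m) <= A Z_n Z_m and, after gluing words with the gap of length p provided by specification,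
   also B Z_n Z_m <= Z_(n+m); a Fekete-type argument then makes Z_n comparable to exp(n Q).
   Since the normalised g_n depends only on y_1...y_n, an (n,eps)-separated set contains at most
   l^m points of each n-cylinder once 2^(-m) <= eps, while one point per n-cylinder is separated
   for eps < 1. Hence every separated sum lies between S_n and l^m S_n, the pressure of the
   normalised potential on Y is Q - P_X(F), and exp(n P_Y)/S_n stays between two positive constants. *)

section \<open>Words and cylinders\<close>

lemma shift_pow_apply: "(shift ^^ n) x i = x (n + i)"
  by (induction n arbitrary: i) (auto simp: shift_def)

lemma word_length [simp]: "length (word n x) = n"
  by (simp add: word_def)

lemma word_nth: "i < n \<Longrightarrow> word n x ! i = x i"
  by (simp add: word_def)

lemma word_eq_iff: "word n x = word n y \<longleftrightarrow> (\<forall>i<n. x i = y i)"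
  by (auto simp: word_def)

lemma word_in_cyl: "x \<in> cyl (word n x)"
  by (simp add: cyl_def word_nth)

lemma word_eq_if_in_cyl: "x \<in> cyl u \<Longrightarrow> word (length u) x = u"
  by (auto simp: cyl_def word_def intro: nth_equalityI)

lemma in_cyl_iff_word: "length u = n \<Longrightarrow> x \<in> cyl u \<longleftrightarrow> word n x = u"
  using word_eq_if_in_cyl word_in_cyl by metis

lemma map_word: "map \<phi> (word n x) = word n (\<phi> \<circ> x)"
  by (simp add: word_def)

lemma take_word: "n \<le> N \<Longrightarrow> take n (word N x) = word n x"
  by (simp add: word_def take_map)

lemma drop_word: "drop n (word (n + m) x) = word m ((shift ^^ n) x)"
  by (rule nth_equalityI) (auto simp: word_nth shift_pow_apply)

lemma Bn_length: "u \<in> Bn n X \<Longrightarrow> length u = n"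
  by (auto simp: Bn_def)

lemma word_in_Bn: "x \<in> X \<Longrightarrow> word n x \<in> Bn n X"
  by (auto simp: Bn_def)

lemma language_in_Bn: "u \<in> language X \<Longrightarrow> u \<in> Bn (length u) X"
  by (auto simp: language_def Bn_def)

lemma finite_Bn:
  assumes "X \<subseteq> {x. \<forall>i. x i \<in> {1..k}}"
  shows "finite (Bn n X)"
proof (rule finite_subset)
  show "Bn n X \<subseteq> {xs. set xs \<subseteq> {1..k} \<and> length xs = n}"
    using assms unfolding Bn_def word_def by fastforce
qed (simp add: finite_lists_length_eq)

lemma shift_pow_in_subshift: "subshift k X \<Longrightarrow> x \<in> X \<Longrightarrow> (shift ^^ n) x \<in> X"
  by (induction n) (auto simp: subshift_def)

lemma Bn_take: "u \<in> Bn (n + m) X \<Longrightarrow> take n u \<in> Bn n X"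
  by (auto simp: Bn_def take_word)

lemma Bn_drop: "subshift k X \<Longrightarrow> u \<in> Bn (n + m) X \<Longrightarrow> drop n u \<in> Bn m X"
  by (auto simp: Bn_def drop_word intro: shift_pow_in_subshift)

definition cyl_rep :: "(nat \<Rightarrow> nat) set \<Rightarrow> nat list \<Rightarrow> (nat \<Rightarrow> nat)" where
  "cyl_rep X u = (SOME x. x \<in> X \<and> x \<in> cyl u)"

lemma cyl_rep:
  assumes "u \<in> Bn n X"
  shows "cyl_rep X u \<in> X" and "cyl_rep X u \<in> cyl u" and "word n (cyl_rep X u) = u"
proof -
  obtain x where "x \<in> X" "u = word n x"
    using assms by (auto simp: Bn_def)
  then have "\<exists>x. x \<in> X \<and> x \<in> cyl u"
    using word_in_cyl by blast
  then have "cyl_rep X u \<in> X \<and> cyl_rep X u \<in> cyl u"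
    unfolding cyl_rep_def by (rule someI_ex)
  then show "cyl_rep X u \<in> X" "cyl_rep X u \<in> cyl u" "word n (cyl_rep X u) = u"
    using in_cyl_iff_word Bn_length[OF assms] by auto
qed

lemma specification_gluing:
  assumes "has_specification X"
  obtains p glue where "p \<ge> 1"
    and "\<And>n m v w. n \<ge> 1 \<Longrightarrow> m \<ge> 1 \<Longrightarrow> v \<in> Bn n X \<Longrightarrow> w \<in> Bn m X \<Longrightarrow>
           glue v w \<in> Bn (n + p + m) X \<and> take n (glue v w) = v \<and> drop (n + p) (glue v w) = w"
proof -
  obtain p where p: "p > 0"
    and spec: "\<And>v w. v \<in> language X \<Longrightarrow> w \<in> language X \<Longrightarrow> v \<noteq> [] \<Longrightarrow> w \<noteq> [] \<Longrightarrow>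
                 \<exists>g. length g = p \<and> v @ g @ w \<in> language X"
    using assms by (auto simp: has_specification_def)
  define glue where "glue v w = v @ (SOME g. length g = p \<and> v @ g @ w \<in> language X) @ w" for v w
  have "glue v w \<in> Bn (n + p + m) X \<and> take n (glue v w) = v \<and> drop (n + p) (glue v w) = w"
    if "n \<ge> 1" "m \<ge> 1" "v \<in> Bn n X" "w \<in> Bn m X" for n m v w
  proof -
    have len: "length v = n" "length w = m"
      using that Bn_length by auto
    have "v \<in> language X" "w \<in> language X" "v \<noteq> []" "w \<noteq> []"
      using that len by (auto simp: language_def)
    then have "\<exists>g. length g = p \<and> v @ g @ w \<in> language X"
      by (rule spec)
    then have g: "length (SOME g. length g = p \<and> v @ g @ w \<in> language X) = p \<and>
                  glue v w \<in> language X"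
      unfolding glue_def by (rule someI_ex)
    then show ?thesis
      using language_in_Bn[of "glue v w" X] len by (simp add: glue_def add.assoc)
  qed
  moreover have "p \<ge> 1"
    using p by simp
  ultimately show ?thesis
    using that by blast
qed

section \<open>Quasi-multiplicative sequences\<close>

lemma superadditive_le_linear_le_subadditive:
  fixes b c :: "nat \<Rightarrow> real"
  assumes sub: "\<And>n m. n \<ge> 1 \<Longrightarrow> m \<ge> 1 \<Longrightarrow> b (n + m) \<le> b n + b m"
    and super: "\<And>n m. n \<ge> 1 \<Longrightarrow> m \<ge> 1 \<Longrightarrow> c n + c m \<le> c (n + m)"
    and le: "\<And>n. n \<ge> 1 \<Longrightarrow> c n \<le> b n"
  shows "\<exists>Q. \<forall>n\<ge>1. c n \<le> real n * Q \<and> real n * Q \<le> b n"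
proof -
  have b_mult: "b (j * n) \<le> real j * b n" if "n \<ge> 1" "j \<ge> 1" for j n
    using that(2)
  proof (induction j rule: dec_induct)
    case (step j)
    have "b (Suc j * n) \<le> b (j * n) + b n"
      using sub[of "j * n" n] step that by (simp add: add.commute)
    with step show ?case by (simp add: algebra_simps)
  qed simp
  have c_mult: "real j * c n \<le> c (j * n)" if "n \<ge> 1" "j \<ge> 1" for j n
    using that(2)
  proof (induction j rule: dec_induct)
    case (step j)
    have "c (j * n) + c n \<le> c (Suc j * n)"
      using super[of "j * n" n] step that by (simp add: add.commute)
    with step show ?case by (simp add: algebra_simps)
  qed simp
  have ratio: "c n / real n \<le> b m / real m" if "n \<ge> 1" "m \<ge> 1" for n m
  proof -
    \<comment> \<open>compare both sequences at the common index \<open>m * n\<close>\<close>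
    have "real m * c n \<le> c (m * n)" using c_mult that by simp
    also have "\<dots> \<le> b (n * m)" using le that by (simp add: mult.commute)
    also have "\<dots> \<le> real n * b m" using b_mult that by simp
    finally show ?thesis using that by (simp add: divide_simps mult.commute)
  qed
  define Q where "Q = (SUP n\<in>{1..}. c n / real n)"
  have bdd: "bdd_above ((\<lambda>n. c n / real n) ` {1..})"
    using ratio[of _ 1] by (auto intro!: bdd_aboveI2)
  have "c n / real n \<le> Q" if "n \<ge> 1" for n
    unfolding Q_def by (rule cSUP_upper[OF _ bdd]) (use that in auto)
  moreover have "Q \<le> b m / real m" if "m \<ge> 1" for m
    unfolding Q_def by (rule cSUP_least) (use that ratio in auto)
  ultimately show ?thesis
    by (auto simp: divide_simps mult.commute)
qed

lemma quasi_multiplicative_exp_bounds: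
  fixes s :: "nat \<Rightarrow> real"
  assumes pos: "\<And>n. n \<ge> 1 \<Longrightarrow> s n > 0" and "A > 0" "B > 0"
    and upper: "\<And>n m. n \<ge> 1 \<Longrightarrow> m \<ge> 1 \<Longrightarrow> s (n + m) \<le> A * s n * s m"
    and lower: "\<And>n m. n \<ge> 1 \<Longrightarrow> m \<ge> 1 \<Longrightarrow> B * s n * s m \<le> s (n + m)"
  shows "\<exists>Q. \<forall>n\<ge>1. B * s n \<le> exp (real n * Q) \<and> exp (real n * Q) \<le> A * s n"
proof -
  have "\<exists>Q. \<forall>n\<ge>1. ln (B * s n) \<le> real n * Q \<and> real n * Q \<le> ln (A * s n)"
  proof (rule superadditive_le_linear_le_subadditive)
    fix n m :: nat assume nm: "n \<ge> 1" "m \<ge> 1"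
    have spos: "s n > 0" "s m > 0" "s (n + m) > 0"
      using pos nm by auto
    have "ln (A * s (n + m)) \<le> ln (A * (A * s n * s m))"
      using upper[OF nm] pos nm \<open>A > 0\<close> by simp
    then show "ln (A * s (n + m)) \<le> ln (A * s n) + ln (A * s m)"
      using spos \<open>A > 0\<close> by (simp add: ln_mult)
    have "ln (B * (B * s n * s m)) \<le> ln (B * s (n + m))"
      using lower[OF nm] pos nm \<open>B > 0\<close> by simp
    then show "ln (B * s n) + ln (B * s m) \<le> ln (B * s (n + m))"
      using spos \<open>B > 0\<close> by (simp add: ln_mult)
  next
    fix n :: nat assume n: "n \<ge> 1"
    have "B * s 1 * s 1 \<le> A * s 1 * s 1"
      using lower[of 1 1] upper[of 1 1] by simp
    then have "B \<le> A" using pos[of 1] by simp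
    then show "ln (B * s n) \<le> ln (A * s n)"
      using pos[OF n] \<open>B > 0\<close> by simp
  qed
  then obtain Q where Q: "\<And>n. n \<ge> 1 \<Longrightarrow> ln (B * s n) \<le> real n * Q \<and> real n * Q \<le> ln (A * s n)"
    by blast
  have "B * s n \<le> exp (real n * Q) \<and> exp (real n * Q) \<le> A * s n" if "n \<ge> 1" for n
  proof
    have "exp (ln (B * s n)) \<le> exp (real n * Q)"
      using Q[OF that] by simp
    then show "B * s n \<le> exp (real n * Q)"
      using pos[OF that] \<open>B > 0\<close> by simp
    show "exp (real n * Q) \<le> A * s n"
      using Q[OF that] pos[OF that] \<open>A > 0\<close> by (simp add: ln_ge_iff)
  qed
  then show ?thesis by blast
qed

lemma supermultiplicative_remove_gap:
  fixes s :: "nat \<Rightarrow> real"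
  assumes "p \<ge> 1" "s p > 0" "A > 0" "K > 0"
    and upper: "\<And>n m. n \<ge> 1 \<Longrightarrow> m \<ge> 1 \<Longrightarrow> s (n + m) \<le> A * s n * s m"
    and gap: "\<And>n m. n \<ge> 1 \<Longrightarrow> m \<ge> 1 \<Longrightarrow> K * s n * s m \<le> s (n + p + m)"
  shows "\<exists>B>0. \<forall>n\<ge>1. \<forall>m\<ge>1. B * s n * s m \<le> s (n + m)"
proof (intro exI[of _ "K / (A * s p)"] conjI allI impI)
  fix n m :: nat assume nm: "n \<ge> 1" "m \<ge> 1"
  have "K * s n * s m \<le> s (n + m + p)"
    using gap[OF nm] by (simp add: add_ac)
  also have "\<dots> \<le> A * s (n + m) * s p"
    using upper[of "n + m" p] nm \<open>p \<ge> 1\<close> by simp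
  finally show "K / (A * s p) * s n * s m \<le> s (n + m)"
    using assms(2,3) by (simp add: divide_simps mult.commute mult.left_commute)
qed (use assms in simp)

lemma ln_over_n_tendsto:
  fixes T :: "nat \<Rightarrow> real"
  assumes "c1 > 0"
    and bounds: "\<And>n. n \<ge> 1 \<Longrightarrow> c1 * exp (real n * Q) \<le> T n \<and> T n \<le> c2 * exp (real n * Q)"
  shows "(\<lambda>n. ln (T n) / real n) \<longlonglongrightarrow> Q"
proof (rule tendsto_sandwich)
  have "c1 * exp (real 1 * Q) \<le> c2 * exp (real 1 * Q)"
    using bounds[of 1] by (meson order.trans order_refl)
  then have c2: "c2 > 0"
    using \<open>c1 > 0\<close> by simp
  have ln_bounds: "ln c1 + real n * Q \<le> ln (T n) \<and> ln (T n) \<le> ln c2 + real n * Q" if "n \<ge> 1" for n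
  proof -
    have T: "0 < T n"
      using bounds[OF that] \<open>c1 > 0\<close> by (meson exp_gt_zero mult_pos_pos order.strict_trans2)
    have "ln (c1 * exp (real n * Q)) \<le> ln (T n)" "ln (T n) \<le> ln (c2 * exp (real n * Q))"
      using bounds[OF that] T \<open>c1 > 0\<close> c2 by simp_all
    then show ?thesis
      using \<open>c1 > 0\<close> c2 by (simp add: ln_mult)
  qed
  have shift_const: "ln c / real n + Q = (ln c + real n * Q) / real n" if "n \<ge> 1" for c n
    using that by (simp add: field_simps)
  show "\<forall>\<^sub>F n in sequentially. ln c1 / real n + Q \<le> ln (T n) / real n"
    using eventually_ge_at_top[of 1]
    by eventually_elim (use ln_bounds shift_const in \<open>simp add: divide_right_mono\<close>)
  show "\<forall>\<^sub>F n in sequentially. ln (T n) / real n \<le> ln c2 / real n + Q"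
    using eventually_ge_at_top[of 1]
    by eventually_elim (use ln_bounds shift_const in \<open>simp add: divide_right_mono\<close>)
  show "(\<lambda>n. ln c1 / real n + Q) \<longlonglongrightarrow> Q" "(\<lambda>n. ln c2 / real n + Q) \<longlonglongrightarrow> Q"
    using tendsto_add[OF lim_const_over_n tendsto_const] by simp_all
qed

section \<open>Pressure of potentials depending on finitely many coordinates\<close>

lemma seqdist_gt_imp_differ:
  assumes dist: "seqdist a b > \<epsilon>" and eps: "(1/2::real) ^ m \<le> \<epsilon>"
  shows "\<exists>j<m. a j \<noteq> b j"
proof -
  have "0 < \<epsilon>"
    using eps by (rule less_le_trans[rotated]) simp
  then have "a \<noteq> b"
    using assms by (auto simp: seqdist_def)
  then obtain i where "a i \<noteq> b i" by auto
  define j where "j = (LEAST i. a i \<noteq> b i)"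
  have "a j \<noteq> b j"
    unfolding j_def by (rule LeastI) fact
  moreover have "j < m"
  proof (rule ccontr)
    assume "\<not> j < m"
    then have "(1/2::real) ^ j \<le> (1/2) ^ m"
      by (intro power_decreasing) auto
    moreover have "\<epsilon> < (1/2) ^ j"
      using dist \<open>a \<noteq> b\<close> by (simp add: seqdist_def j_def)
    ultimately show False
      using eps by linarith
  qed
  ultimately show ?thesis by blast
qed

lemma card_separated_fiber_le:
  assumes alphabet: "Y \<subseteq> {x. \<forall>i. x i \<in> {1..l}}"
    and sep: "separated Y n \<epsilon> E" and eps: "(1/2::real) ^ m \<le> \<epsilon>"
  shows "card {y \<in> E. word n y = w} \<le> l ^ m"
proof -
  define F where "F = {y \<in> E. word n y = w}"
  define h where "h y = word m ((shift ^^ n) y)" for y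
  have "inj_on h F"
  proof (rule inj_onI, rule ccontr)
    fix y y' assume y: "y \<in> F" and y': "y' \<in> F" and eq: "h y = h y'" and "y \<noteq> y'"
    then obtain i where i: "i < n" "seqdist ((shift ^^ i) y) ((shift ^^ i) y') > \<epsilon>"
      using sep unfolding separated_def F_def by blast
    then obtain j where j: "j < m" "y (i + j) \<noteq> y' (i + j)"
      using seqdist_gt_imp_differ[OF i(2) eps] by (auto simp: shift_pow_apply)
    have "\<forall>t<n. y t = y' t"
      using y y' by (simp add: F_def flip: word_eq_iff)
    moreover have "\<forall>t<m. y (n + t) = y' (n + t)"
      using eq by (simp add: h_def word_eq_iff shift_pow_apply)
    ultimately show False
    proof (cases "i + j < n")
      case False
      then have "i + j = n + (i + j - n)" "i + j - n < m"
        using i j by auto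
      then have "y (n + (i + j - n)) = y' (n + (i + j - n))"
        using \<open>\<forall>t<m. y (n + t) = y' (n + t)\<close> by blast
      then show False
        using j \<open>i + j = n + (i + j - n)\<close> by simp
    qed (use j in blast)
  qed
  moreover have "h ` F \<subseteq> {xs. set xs \<subseteq> {1..l} \<and> length xs = m}"
  proof
    fix xs assume "xs \<in> h ` F"
    then obtain y where "y \<in> Y" "xs = h y"
      using sep by (auto simp: F_def separated_def)
    then show "xs \<in> {xs. set xs \<subseteq> {1..l} \<and> length xs = m}"
      using alphabet by (auto simp: h_def word_def shift_pow_apply)
  qed
  ultimately have "card F \<le> card {xs. set xs \<subseteq> {1..l} \<and> length xs = m}"
    by (simp add: card_mono finite_lists_length_eq flip: card_image)
  then show ?thesis
    by (simp add: F_def card_lists_length_eq)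
qed

lemma separated_cyl_reps:
  assumes alphabet: "Y \<subseteq> {x. \<forall>i. x i \<in> {1..l}}" and "\<epsilon> < 1"
  shows "separated Y n \<epsilon> (cyl_rep Y ` Bn n Y)"
proof -
  have "\<exists>i<n. seqdist ((shift ^^ i) y) ((shift ^^ i) y') > \<epsilon>"
    if reps: "y \<in> cyl_rep Y ` Bn n Y" "y' \<in> cyl_rep Y ` Bn n Y" and "y \<noteq> y'" for y y'
  proof -
    obtain w w' where "w \<in> Bn n Y" "w' \<in> Bn n Y" "y = cyl_rep Y w" "y' = cyl_rep Y w'"
      using reps by blast
    then have "word n y \<noteq> word n y'"
      using \<open>y \<noteq> y'\<close> cyl_rep(3) by metis
    then obtain i where i: "i < n" "y i \<noteq> y' i"
      by (auto simp: word_eq_iff)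
    then have differ: "(shift ^^ i) y 0 \<noteq> (shift ^^ i) y' 0"
      by (simp add: shift_pow_apply)
    then have "(LEAST j. (shift ^^ i) y j \<noteq> (shift ^^ i) y' j) = 0"
      by (intro Least_equality) auto
    then have "seqdist ((shift ^^ i) y) ((shift ^^ i) y') = 1"
      using differ by (auto simp: seqdist_def)
    then show ?thesis
      using i \<open>\<epsilon> < 1\<close> by auto
  qed
  then show ?thesis
    using finite_Bn[OF alphabet] cyl_rep(1) by (auto simp: separated_def)
qed

lemma sum_separated_le:
  assumes alphabet: "Y \<subseteq> {x. \<forall>i. x i \<in> {1..l}}"
    and local: "\<And>y y'. word n y = word n y' \<Longrightarrow> g y = g y'"
    and nonneg: "\<And>y. y \<in> Y \<Longrightarrow> g y \<ge> 0"
    and sep: "separated Y n \<epsilon> E" and eps: "(1/2::real) ^ m \<le> \<epsilon>"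
  shows "(\<Sum>y\<in>E. g y) \<le> real l ^ m * (\<Sum>w\<in>Bn n Y. g (cyl_rep Y w))"
proof -
  have E: "finite E" "E \<subseteq> Y"
    using sep by (auto simp: separated_def)
  then have "(\<Sum>y\<in>E. g y) = (\<Sum>w\<in>Bn n Y. \<Sum>y\<in>{y \<in> E. word n y = w}. g y)"
    by (intro sum.group[symmetric] finite_Bn[OF alphabet]) (auto intro: word_in_Bn)
  also have "\<dots> = (\<Sum>w\<in>Bn n Y. \<Sum>y\<in>{y \<in> E. word n y = w}. g (cyl_rep Y w))"
  proof (intro sum.cong refl)
    fix w y assume "w \<in> Bn n Y" "y \<in> {y \<in> E. word n y = w}"
    then show "g y = g (cyl_rep Y w)"
      using local cyl_rep(3) by simp
  qed
  also have "\<dots> = (\<Sum>w\<in>Bn n Y. card {y \<in> E. word n y = w} * g (cyl_rep Y w))"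
    by simp
  also have "\<dots> \<le> (\<Sum>w\<in>Bn n Y. real l ^ m * g (cyl_rep Y w))"
    using card_separated_fiber_le[OF alphabet sep eps] nonneg cyl_rep(1)
    by (intro sum_mono mult_right_mono) (auto simp flip: of_nat_power)
  finally show ?thesis
    by (simp add: sum_distrib_left)
qed

lemma separated_SUP_bounds:
  assumes alphabet: "Y \<subseteq> {x. \<forall>i. x i \<in> {1..l}}"
    and local: "\<And>y y'. word n y = word n y' \<Longrightarrow> g y = g y'"
    and nonneg: "\<And>y. y \<in> Y \<Longrightarrow> g y \<ge> 0"
    and "\<epsilon> < 1" and eps: "(1/2::real) ^ m \<le> \<epsilon>"
  shows "(\<Sum>w\<in>Bn n Y. g (cyl_rep Y w)) \<le> (SUP E\<in>{E. separated Y n \<epsilon> E}. \<Sum>y\<in>E. g y)"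
    and "(SUP E\<in>{E. separated Y n \<epsilon> E}. \<Sum>y\<in>E. g y) \<le> real l ^ m * (\<Sum>w\<in>Bn n Y. g (cyl_rep Y w))"
proof -
  have le: "(\<Sum>y\<in>E. g y) \<le> real l ^ m * (\<Sum>w\<in>Bn n Y. g (cyl_rep Y w))" if "separated Y n \<epsilon> E" for E
    using local nonneg by (intro sum_separated_le[OF alphabet _ _ that eps]) blast+
  have "inj_on (cyl_rep Y) (Bn n Y)"
    by (metis cyl_rep(3) inj_onI)
  then have "(\<Sum>w\<in>Bn n Y. g (cyl_rep Y w)) = (\<Sum>y\<in>cyl_rep Y ` Bn n Y. g y)"
    by (simp add: sum.reindex)
  also have "\<dots> \<le> (SUP E\<in>{E. separated Y n \<epsilon> E}. \<Sum>y\<in>E. g y)"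
    using separated_cyl_reps[OF alphabet \<open>\<epsilon> < 1\<close>] le by (intro cSUP_upper bdd_aboveI2) auto
  finally show "(\<Sum>w\<in>Bn n Y. g (cyl_rep Y w)) \<le> (SUP E\<in>{E. separated Y n \<epsilon> E}. \<Sum>y\<in>E. g y)" .
  show "(SUP E\<in>{E. separated Y n \<epsilon> E}. \<Sum>y\<in>E. g y) \<le> real l ^ m * (\<Sum>w\<in>Bn n Y. g (cyl_rep Y w))"
    using separated_cyl_reps[OF alphabet \<open>\<epsilon> < 1\<close>] le by (intro cSUP_least) auto
qed

lemma pressure_eq_of_exp_bounds:
  assumes Y: "subshift l Y"
    and local: "\<And>n y y'. word n y = word n y' \<Longrightarrow> g n y = g n y'"
    and nonneg: "\<And>n y. n \<ge> 1 \<Longrightarrow> y \<in> Y \<Longrightarrow> g n y \<ge> 0"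
    and "c1 > 0"
    and bounds: "\<And>n. n \<ge> 1 \<Longrightarrow> c1 * exp (real n * Q) \<le> (\<Sum>w\<in>Bn n Y. g n (cyl_rep Y w)) \<and>
                                   (\<Sum>w\<in>Bn n Y. g n (cyl_rep Y w)) \<le> c2 * exp (real n * Q)"
  shows "pressure Y g = Q"
proof -
  have alphabet: "Y \<subseteq> {x. \<forall>i. x i \<in> {1..l}}"
    using Y by (simp add: subshift_def)
  have limsup: "limsup (\<lambda>n. ereal (ln (SUP E\<in>{E. separated Y n \<epsilon> E}. \<Sum>y\<in>E. g n y) / real n)) = ereal Q"
    if "0 < \<epsilon>" "\<epsilon> < 1" for \<epsilon> :: real
  proof -
    obtain m where m: "(1/2::real) ^ m \<le> \<epsilon>"
      using real_arch_pow_inv[of \<epsilon> "1/2"] \<open>0 < \<epsilon>\<close> by (auto intro: less_imp_le)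
    define P where "P n = (SUP E\<in>{E. separated Y n \<epsilon> E}. \<Sum>y\<in>E. g n y)" for n
    have "c1 * exp (real n * Q) \<le> P n \<and> P n \<le> (real l ^ m * c2) * exp (real n * Q)" if "n \<ge> 1" for n
    proof -
      have "(\<Sum>w\<in>Bn n Y. g n (cyl_rep Y w)) \<le> P n"
        "P n \<le> real l ^ m * (\<Sum>w\<in>Bn n Y. g n (cyl_rep Y w))"
        unfolding P_def using local nonneg \<open>n \<ge> 1\<close>
        by (intro separated_SUP_bounds[OF alphabet _ _ \<open>\<epsilon> < 1\<close> m]; blast)+
      moreover have "real l ^ m * (\<Sum>w\<in>Bn n Y. g n (cyl_rep Y w)) \<le> real l ^ m * (c2 * exp (real n * Q))"
        using bounds[OF that] by (simp add: mult_left_mono)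
      ultimately show ?thesis
        using bounds[OF that] unfolding mult.assoc by linarith
    qed
    then have "(\<lambda>n. ln (P n) / real n) \<longlonglongrightarrow> Q"
      by (rule ln_over_n_tendsto[OF \<open>c1 > 0\<close>])
    then have "limsup (\<lambda>n. ereal (ln (P n) / real n)) = ereal Q"
      by (intro lim_imp_Limsup tendsto_ereal) simp_all
    then show ?thesis
      by (simp add: P_def)
  qed
  have "((\<lambda>\<epsilon>. limsup (\<lambda>n. ereal (ln (SUP E\<in>{E. separated Y n \<epsilon> E}. \<Sum>y\<in>E. g n y) / real n)))
          \<longlongrightarrow> ereal Q) (at_right 0)"
    by (rule tendsto_eventually)
      (use limsup in \<open>auto simp: eventually_at_right_field intro!: exI[of _ 1]\<close>)
  then show ?thesis
    unfolding pressure_def by (simp add: tendsto_Lim)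
qed

section \<open>The partition function of an almost additive potential\<close>

locale almost_additive_subshift =
  fixes k :: nat and X :: "(nat \<Rightarrow> nat) set" and f :: "nat \<Rightarrow> (nat \<Rightarrow> nat) \<Rightarrow> real"
  assumes subshift: "subshift k X"
    and almost_additive: "almost_additive X f"
    and bounded_variation: "bounded_variation X f"
begin

lemma nonempty: "X \<noteq> {}"
  using subshift by (simp add: subshift_def)

lemma finite_Bn_X: "finite (Bn n X)"
  using subshift by (intro finite_Bn[of X k]) (simp add: subshift_def)

lemma shift_pow_in: "x \<in> X \<Longrightarrow> (shift ^^ n) x \<in> X"
  using shift_pow_in_subshift[OF subshift] .

lemma f_pos: "n \<ge> 1 \<Longrightarrow> x \<in> X \<Longrightarrow> f n x > 0"
  using almost_additive by (simp add: almost_additive_def)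

lemma almost_additive_const:
  obtains C where "C > 0"
    and "\<And>n m x. n \<ge> 1 \<Longrightarrow> m \<ge> 1 \<Longrightarrow> x \<in> X \<Longrightarrow>
           exp (- C) * f n x * f m ((shift ^^ n) x) \<le> f (n + m) x"
    and "\<And>n m x. n \<ge> 1 \<Longrightarrow> m \<ge> 1 \<Longrightarrow> x \<in> X \<Longrightarrow>
           f (n + m) x \<le> exp C * f n x * f m ((shift ^^ n) x)"
  using almost_additive unfolding almost_additive_def by blast

definition cyl_weight :: "nat list \<Rightarrow> real" where
  "cyl_weight u = f (length u) (cyl_rep X u)"

definition partition_sum :: "nat \<Rightarrow> real" where
  "partition_sum n = (\<Sum>u\<in>Bn n X. cyl_weight u)"

lemma cyl_weight_rep: "u \<in> Bn n X \<Longrightarrow> cyl_weight u = f n (cyl_rep X u)"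
  by (simp add: cyl_weight_def Bn_length)

lemma cyl_weight_pos: "u \<in> Bn n X \<Longrightarrow> n \<ge> 1 \<Longrightarrow> cyl_weight u > 0"
  by (simp add: cyl_weight_rep cyl_rep(1) f_pos)

lemma cyl_weight_nonneg: "u \<in> Bn n X \<Longrightarrow> n \<ge> 1 \<Longrightarrow> cyl_weight u \<ge> 0"
  using cyl_weight_pos by (simp add: order_less_imp_le)

lemma partition_sum_pos: "n \<ge> 1 \<Longrightarrow> partition_sum n > 0"
proof -
  assume "n \<ge> 1"
  obtain x where "x \<in> X"
    using nonempty by blast
  then have "Bn n X \<noteq> {}"
    using word_in_Bn by blast
  then show ?thesis
    unfolding partition_sum_def using finite_Bn_X cyl_weight_pos \<open>n \<ge> 1\<close> by (intro sum_pos) auto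
qed

lemma cyl_weight_distortion:
  obtains M where "M \<ge> 1"
    and "\<And>n x. n \<ge> 1 \<Longrightarrow> x \<in> X \<Longrightarrow> f n x \<le> M * cyl_weight (word n x)"
    and "\<And>n x. n \<ge> 1 \<Longrightarrow> x \<in> X \<Longrightarrow> cyl_weight (word n x) \<le> M * f n x"
proof -
  obtain M where bv: "\<And>n x x'. n \<ge> 1 \<Longrightarrow> x \<in> X \<Longrightarrow> x' \<in> X \<Longrightarrow> (\<forall>i<n. x i = x' i) \<Longrightarrow>
                        f n x \<le> M * f n x'"
    using bounded_variation unfolding bounded_variation_def by blast
  obtain x0 where "x0 \<in> X"
    using nonempty by blast
  then have "f 1 x0 \<le> M * f 1 x0" "f 1 x0 > 0"
    using bv f_pos by auto
  then have "M \<ge> 1"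
    by simp
  moreover have "cyl_rep X (word n x) \<in> X" "\<forall>i<n. x i = cyl_rep X (word n x) i" if "x \<in> X" for n x
    using cyl_rep[OF word_in_Bn[OF that]] by (auto simp: word_eq_iff)
  ultimately show ?thesis
    using that bv by (simp add: cyl_weight_def)
qed

lemma f_lower_bound:
  assumes "q \<ge> 1"
  shows "\<exists>c>0. \<forall>x\<in>X. c \<le> f q x"
proof -
  obtain M where "M \<ge> 1" and M: "\<And>x. x \<in> X \<Longrightarrow> cyl_weight (word q x) \<le> M * f q x"
    using cyl_weight_distortion assms by metis
  define c where "c = Min (cyl_weight ` Bn q X) / M"
  obtain x0 where "x0 \<in> X"
    using nonempty by blast
  then have "Min (cyl_weight ` Bn q X) \<in> cyl_weight ` Bn q X"
    using finite_Bn_X word_in_Bn[of x0 X q] by (intro Min_in) auto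
  then have "c > 0"
    using cyl_weight_pos assms \<open>M \<ge> 1\<close> by (auto simp: c_def)
  moreover have "c \<le> f q x" if "x \<in> X" for x
  proof -
    have "Min (cyl_weight ` Bn q X) \<le> M * f q x"
      using M[OF that] finite_Bn_X word_in_Bn[OF that] by (meson Min_le finite_imageI image_eqI order.trans)
    then show ?thesis
      using \<open>M \<ge> 1\<close> by (simp add: c_def divide_simps mult.commute)
  qed
  ultimately show ?thesis
    by blast
qed

lemma cyl_weight_split_upper:
  "\<exists>A>0. \<forall>n\<ge>1. \<forall>m\<ge>1. \<forall>u\<in>Bn (n + m) X.
     cyl_weight u \<le> A * cyl_weight (take n u) * cyl_weight (drop n u)"
proof -
  obtain C where "C > 0" and upper: "\<And>n m x. n \<ge> 1 \<Longrightarrow> m \<ge> 1 \<Longrightarrow> x \<in> X \<Longrightarrow>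
                                       f (n + m) x \<le> exp C * f n x * f m ((shift ^^ n) x)"
    using almost_additive_const by metis
  obtain M where "M \<ge> 1" and M: "\<And>n x. n \<ge> 1 \<Longrightarrow> x \<in> X \<Longrightarrow> f n x \<le> M * cyl_weight (word n x)"
    using cyl_weight_distortion by metis
  have "cyl_weight u \<le> exp C * M\<^sup>2 * cyl_weight (take n u) * cyl_weight (drop n u)"
    if "n \<ge> 1" "m \<ge> 1" "u \<in> Bn (n + m) X" for n m u
  proof -
    define x where "x = cyl_rep X u"
    have x: "x \<in> X" "word (n + m) x = u"
      using cyl_rep[OF that(3)] by (simp_all add: x_def)
    have "cyl_weight u = f (n + m) x"
      using cyl_weight_rep[OF that(3)] by (simp add: x_def)
    also have "\<dots> \<le> exp C * (f n x * f m ((shift ^^ n) x))"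
      using upper[OF that(1,2) x(1)] by (simp add: mult.assoc)
    also have "\<dots> \<le> exp C * ((M * cyl_weight (word n x)) * (M * cyl_weight (word m ((shift ^^ n) x))))"
      using M[OF that(1) x(1)] M[OF that(2) shift_pow_in[OF x(1)]] f_pos that x(1) shift_pow_in
        cyl_weight_pos[OF word_in_Bn[OF x(1)], of n] \<open>M \<ge> 1\<close>
      by (intro mult_left_mono mult_mono) (auto intro: less_imp_le)
    finally show ?thesis
      using x(2) take_word[of n "n + m" x] drop_word[of n m x] by (simp add: power2_eq_square ac_simps)
  qed
  then show ?thesis
    using \<open>M \<ge> 1\<close> by (intro exI[of _ "exp C * M\<^sup>2"]) auto
qed

lemma cyl_weight_gap_lower:
  assumes "p \<ge> 1"
  shows "\<exists>K>0. \<forall>n\<ge>1. \<forall>m\<ge>1. \<forall>u\<in>Bn (n + p + m) X.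
           K * cyl_weight (take n u) * cyl_weight (drop (n + p) u) \<le> cyl_weight u"
proof -
  obtain C where "C > 0" and lower: "\<And>n m x. n \<ge> 1 \<Longrightarrow> m \<ge> 1 \<Longrightarrow> x \<in> X \<Longrightarrow>
                                       exp (- C) * f n x * f m ((shift ^^ n) x) \<le> f (n + m) x"
    using almost_additive_const by metis
  obtain M where "M \<ge> 1" and M: "\<And>n x. n \<ge> 1 \<Longrightarrow> x \<in> X \<Longrightarrow> cyl_weight (word n x) \<le> M * f n x"
    using cyl_weight_distortion by metis
  obtain c where "c > 0" and c: "\<And>x. x \<in> X \<Longrightarrow> c \<le> f p x"
    using f_lower_bound[OF assms] by blast
  \<comment> \<open>two applications of almost additivity split \<open>f (n + p + m)\<close> into \<open>f n\<close>, \<open>f p\<close>, \<open>f m\<close>; the gap factor is at least \<open>c\<close>\<close>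
  define K where "K = exp (- C) * exp (- C) * c / M\<^sup>2"
  have "K * cyl_weight (take n u) * cyl_weight (drop (n + p) u) \<le> cyl_weight u"
    if "n \<ge> 1" "m \<ge> 1" "u \<in> Bn (n + p + m) X" for n m u
  proof -
    define x where "x = cyl_rep X u"
    define x' where "x' = (shift ^^ n) x"
    have x: "x \<in> X" "word (n + p + m) x = u"
      using cyl_rep[OF that(3)] by (simp_all add: x_def)
    have x': "x' \<in> X" "(shift ^^ p) x' \<in> X" "(shift ^^ p) x' = (shift ^^ (n + p)) x"
      using x(1) shift_pow_in by (simp_all add: x'_def) (metis add.commute comp_apply funpow_add)
    have "K * cyl_weight (take n u) * cyl_weight (drop (n + p) u)
          = exp (- C) * exp (- C) * c * ((cyl_weight (word n x) / M) * (cyl_weight (word m ((shift ^^ p) x')) / M))"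
      using x(2) x'(3) take_word[of n "n + p + m" x] drop_word[of "n + p" m x]
      by (simp add: K_def power2_eq_square)
    also have "\<dots> \<le> exp (- C) * exp (- C) * f p x' * (f n x * f m ((shift ^^ p) x'))"
    proof (rule mult_mono)
      have "cyl_weight (word n x) / M \<le> f n x"
        "cyl_weight (word m ((shift ^^ p) x')) / M \<le> f m ((shift ^^ p) x')"
        using M[OF that(1) x(1)] M[OF that(2) x'(2)] \<open>M \<ge> 1\<close> by (simp_all add: divide_simps mult.commute)
      moreover have "0 < cyl_weight (word m ((shift ^^ p) x'))" "0 < f n x"
        using cyl_weight_pos[OF word_in_Bn[OF x'(2)]] f_pos[OF that(1) x(1)] that(2) by simp_all
      ultimately show "(cyl_weight (word n x) / M) * (cyl_weight (word m ((shift ^^ p) x')) / M)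
                       \<le> f n x * f m ((shift ^^ p) x')"
        using \<open>M \<ge> 1\<close> by (intro mult_mono) auto
      show "exp (- C) * exp (- C) * c \<le> exp (- C) * exp (- C) * f p x'"
        using c[OF x'(1)] by simp
      show "0 \<le> exp (- C) * exp (- C) * f p x'"
        using c[OF x'(1)] \<open>c > 0\<close> by simp
      show "0 \<le> (cyl_weight (word n x) / M) * (cyl_weight (word m ((shift ^^ p) x')) / M)"
        using cyl_weight_pos[OF word_in_Bn[OF x(1)]] cyl_weight_pos[OF word_in_Bn[OF x'(2)]] that \<open>M \<ge> 1\<close>
        by (simp add: less_imp_le)
    qed
    also have "\<dots> = exp (- C) * f n x * (exp (- C) * f p x' * f m ((shift ^^ p) x'))"
      by (simp add: ac_simps)
    also have "\<dots> \<le> exp (- C) * f n x * f (p + m) x'"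
      using lower[OF \<open>p \<ge> 1\<close> that(2) x'(1)] f_pos[OF that(1) x(1)] by (simp add: mult_left_mono)
    also have "\<dots> \<le> f (n + (p + m)) x"
      using lower[of n "p + m" x] that x(1) by (simp add: x'_def)
    also have "\<dots> = cyl_weight u"
      using cyl_weight_rep[OF that(3)] by (simp add: x_def add.assoc)
    finally show ?thesis .
  qed
  moreover have "K > 0"
    using \<open>c > 0\<close> \<open>M \<ge> 1\<close> by (simp add: K_def)
  ultimately show ?thesis
    by blast
qed

lemma sum_split_weights_le:
  assumes "n \<ge> 1" "m \<ge> 1"
  shows "(\<Sum>u\<in>Bn (n + m) X. cyl_weight (take n u) * cyl_weight (drop n u))
         \<le> partition_sum n * partition_sum m"
proof -
  let ?split = "\<lambda>u. (take n u, drop n u)"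
  have "inj_on ?split (Bn (n + m) X)"
    by (rule inj_onI) (metis append_take_drop_id prod.inject)
  then have "(\<Sum>u\<in>Bn (n + m) X. cyl_weight (take n u) * cyl_weight (drop n u))
             = (\<Sum>(v, w)\<in>?split ` Bn (n + m) X. cyl_weight v * cyl_weight w)"
    by (simp add: sum.reindex)
  also have "\<dots> \<le> (\<Sum>(v, w)\<in>Bn n X \<times> Bn m X. cyl_weight v * cyl_weight w)"
  proof (rule sum_mono2)
    show "?split ` Bn (n + m) X \<subseteq> Bn n X \<times> Bn m X"
      using Bn_take Bn_drop[OF subshift] by blast
    show "0 \<le> (case q of (v, w) \<Rightarrow> cyl_weight v * cyl_weight w)"
      if "q \<in> Bn n X \<times> Bn m X - ?split ` Bn (n + m) X" for q
      using that cyl_weight_nonneg assms by auto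
  qed (simp add: finite_Bn_X)
  also have "\<dots> = partition_sum n * partition_sum m"
    by (simp add: partition_sum_def sum_product sum.cartesian_product)
  finally show ?thesis .
qed

lemma partition_sum_submultiplicative:
  "\<exists>A>0. \<forall>n\<ge>1. \<forall>m\<ge>1. partition_sum (n + m) \<le> A * partition_sum n * partition_sum m"
proof -
  obtain A where "A > 0" and A: "\<And>n m u. n \<ge> 1 \<Longrightarrow> m \<ge> 1 \<Longrightarrow> u \<in> Bn (n + m) X \<Longrightarrow>
                    cyl_weight u \<le> A * cyl_weight (take n u) * cyl_weight (drop n u)"
    using cyl_weight_split_upper by blast
  have "partition_sum (n + m) \<le> A * partition_sum n * partition_sum m" if "n \<ge> 1" "m \<ge> 1" for n m
  proof -
    have "partition_sum (n + m) \<le> (\<Sum>u\<in>Bn (n + m) X. A * (cyl_weight (take n u) * cyl_weight (drop n u)))"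
      unfolding partition_sum_def using A[OF that] by (intro sum_mono) (simp add: mult.assoc)
    also have "\<dots> \<le> A * (partition_sum n * partition_sum m)"
      using sum_split_weights_le[OF that] \<open>A > 0\<close> by (simp add: sum_distrib_left[symmetric])
    finally show ?thesis
      by (simp add: mult.assoc)
  qed
  then show ?thesis
    using \<open>A > 0\<close> by blast
qed

lemma partition_sum_supermultiplicative_gap:
  assumes "has_specification X"
  shows "\<exists>p\<ge>1. \<exists>K>0. \<forall>n\<ge>1. \<forall>m\<ge>1. K * partition_sum n * partition_sum m \<le> partition_sum (n + p + m)"
proof -
  obtain p glue where "p \<ge> 1"
    and glue: "\<And>n m v w. n \<ge> 1 \<Longrightarrow> m \<ge> 1 \<Longrightarrow> v \<in> Bn n X \<Longrightarrow> w \<in> Bn m X \<Longrightarrow>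
                 glue v w \<in> Bn (n + p + m) X \<and> take n (glue v w) = v \<and> drop (n + p) (glue v w) = w"
    using specification_gluing[OF assms] by metis
  obtain K where "K > 0" and K: "\<And>n m u. n \<ge> 1 \<Longrightarrow> m \<ge> 1 \<Longrightarrow> u \<in> Bn (n + p + m) X \<Longrightarrow>
                    K * cyl_weight (take n u) * cyl_weight (drop (n + p) u) \<le> cyl_weight u"
    using cyl_weight_gap_lower[OF \<open>p \<ge> 1\<close>] by blast
  have "K * partition_sum n * partition_sum m \<le> partition_sum (n + p + m)" if "n \<ge> 1" "m \<ge> 1" for n m
  proof -
    let ?glue = "\<lambda>(v, w). glue v w"
    have "inj_on ?glue (Bn n X \<times> Bn m X)"
    proof (rule inj_onI, clarify)
      fix v w v' w' assume "v \<in> Bn n X" "w \<in> Bn m X" "v' \<in> Bn n X" "w' \<in> Bn m X"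
        and "glue v w = glue v' w'"
      then show "v = v' \<and> w = w'"
        using glue[OF that] by metis
    qed
    have "K * partition_sum n * partition_sum m = K * (\<Sum>(v, w)\<in>Bn n X \<times> Bn m X. cyl_weight v * cyl_weight w)"
      by (simp add: partition_sum_def sum_product sum.cartesian_product)
    also have "\<dots> = (\<Sum>(v, w)\<in>Bn n X \<times> Bn m X. K * cyl_weight v * cyl_weight w)"
      by (simp add: sum_distrib_left case_prod_unfold mult.assoc)
    also have "\<dots> \<le> (\<Sum>(v, w)\<in>Bn n X \<times> Bn m X. cyl_weight (glue v w))"
    proof (intro sum_mono, clarify)
      fix v w assume "v \<in> Bn n X" "w \<in> Bn m X"
      then show "K * cyl_weight v * cyl_weight w \<le> cyl_weight (glue v w)"
        using K[OF that] glue[OF that] by metis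
    qed
    also have "\<dots> = (\<Sum>u\<in>?glue ` (Bn n X \<times> Bn m X). cyl_weight u)"
      using \<open>inj_on ?glue (Bn n X \<times> Bn m X)\<close> by (simp add: sum.reindex case_prod_unfold)
    also have "\<dots> \<le> partition_sum (n + p + m)"
      unfolding partition_sum_def using glue[OF that] finite_Bn_X cyl_weight_nonneg that
      by (intro sum_mono2) auto
    finally show ?thesis .
  qed
  then show ?thesis
    using \<open>p \<ge> 1\<close> \<open>K > 0\<close> by blast
qed

lemma partition_sum_exp_bounds:
  assumes "has_specification X"
  shows "\<exists>Q A B. A > 0 \<and> B > 0 \<and>
           (\<forall>n\<ge>1. B * partition_sum n \<le> exp (real n * Q) \<and> exp (real n * Q) \<le> A * partition_sum n)"
proof -
  obtain A where "A > 0"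
    and upper: "\<And>n m. n \<ge> 1 \<Longrightarrow> m \<ge> 1 \<Longrightarrow> partition_sum (n + m) \<le> A * partition_sum n * partition_sum m"
    using partition_sum_submultiplicative by blast
  obtain p K where "p \<ge> 1" "K > 0"
    and gap: "\<And>n m. n \<ge> 1 \<Longrightarrow> m \<ge> 1 \<Longrightarrow> K * partition_sum n * partition_sum m \<le> partition_sum (n + p + m)"
    using partition_sum_supermultiplicative_gap[OF assms] by blast
  obtain B where "B > 0"
    and lower: "\<And>n m. n \<ge> 1 \<Longrightarrow> m \<ge> 1 \<Longrightarrow> B * partition_sum n * partition_sum m \<le> partition_sum (n + m)"
    using supermultiplicative_remove_gap[OF \<open>p \<ge> 1\<close> partition_sum_pos[OF \<open>p \<ge> 1\<close>] \<open>A > 0\<close> \<open>K > 0\<close> upper gap]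
    by blast
  show ?thesis
    using quasi_multiplicative_exp_bounds[OF partition_sum_pos \<open>A > 0\<close> \<open>B > 0\<close> upper lower]
      \<open>A > 0\<close> \<open>B > 0\<close> by blast
qed

end

section \<open>The induced potential on a one-block factor\<close>

lemma gtilde_word_local: "word n y = word n y' \<Longrightarrow> gtilde X \<pi> f n y = gtilde X \<pi> f n y'"
  by (simp add: gtilde_def gfun_def En_sets_def)

locale almost_additive_factor = almost_additive_subshift k X f
  for k :: nat and X :: "(nat \<Rightarrow> nat) set" and f :: "nat \<Rightarrow> (nat \<Rightarrow> nat) \<Rightarrow> real" +
  fixes Y :: "(nat \<Rightarrow> nat) set" and \<pi> :: "(nat \<Rightarrow> nat) \<Rightarrow> (nat \<Rightarrow> nat)" and \<phi> :: "nat \<Rightarrow> nat"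
  assumes factor_image: "\<pi> ` X = Y"
    and one_block: "\<And>x. x \<in> X \<Longrightarrow> \<pi> x = \<phi> \<circ> x"
begin

lemma word_factor: "x \<in> X \<Longrightarrow> word n (\<pi> x) = map \<phi> (word n x)"
  by (simp add: one_block map_word)

lemma Bn_factor: "Bn n Y = map \<phi> ` Bn n X"
proof -
  have "Bn n Y = (\<lambda>x. word n (\<pi> x)) ` X"
    using factor_image by (auto simp: Bn_def)
  also have "\<dots> = map \<phi> ` Bn n X"
    using word_factor by (auto simp: Bn_def image_iff)
  finally show ?thesis .
qed

definition fiber_words :: "nat \<Rightarrow> (nat \<Rightarrow> nat) \<Rightarrow> nat list set" where
  "fiber_words n y = {u \<in> Bn n X. map \<phi> u = word n y}"

definition fiber_weight :: "nat \<Rightarrow> (nat \<Rightarrow> nat) \<Rightarrow> real" where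
  "fiber_weight n y = (\<Sum>u\<in>fiber_words n y. cyl_weight u)"

lemma En_index_eq: "{u \<in> Bn n X. \<pi> ` (X \<inter> cyl u) \<subseteq> cyl (word n y)} = fiber_words n y"
proof -
  have "\<pi> x \<in> cyl (word n y) \<longleftrightarrow> map \<phi> u = word n y" if "u \<in> Bn n X" "x \<in> X" "x \<in> cyl u" for u x
    using word_eq_if_in_cyl[OF that(3)] Bn_length[OF that(1)] word_factor[OF that(2)]
    by (simp add: in_cyl_iff_word)
  moreover have "cyl_rep X u \<in> X \<inter> cyl u" if "u \<in> Bn n X" for u
    using cyl_rep(2)[OF that] cyl_rep(1)[OF that] by blast
  ultimately show ?thesis
    unfolding fiber_words_def by blast
qed

lemma in_fiber_words_iff:
  "u \<in> fiber_words n y \<longleftrightarrow> u \<in> Bn n X \<and> \<pi> ` (X \<inter> cyl u) \<subseteq> cyl (word n y)"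
  using En_index_eq by blast

lemma En_set_sum_le:
  assumes E: "E \<in> En_sets X \<pi> n y"
    and M: "\<And>x. x \<in> X \<Longrightarrow> f n x \<le> M * cyl_weight (word n x)"
  shows "(\<Sum>x\<in>E. f n x) \<le> M * fiber_weight n y"
proof -
  have cover: "E \<subseteq> (\<Union>u\<in>fiber_words n y. X \<inter> cyl u)"
    using E unfolding En_sets_def En_index_eq by blast
  have single: "card (E \<inter> cyl u) = 1" if "u \<in> fiber_words n y" for u
    using E that unfolding En_sets_def in_fiber_words_iff by blast
  have cyl_iff: "x \<in> cyl u \<longleftrightarrow> word n x = u" if "u \<in> fiber_words n y" for u x
    using that in_cyl_iff_word Bn_length unfolding fiber_words_def by blast
  then have fiber_cyl: "E \<inter> cyl u = {x \<in> E. word n x = u}" if "u \<in> fiber_words n y" for u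
    using that by blast
  have word_E: "x \<in> X" "word n x \<in> fiber_words n y" if "x \<in> E" for x
  proof -
    obtain u where "u \<in> fiber_words n y" "x \<in> X" "x \<in> cyl u"
      using cover \<open>x \<in> E\<close> by blast
    then show "x \<in> X" "word n x \<in> fiber_words n y"
      using cyl_iff by auto
  qed
  have fin_fiber: "finite (fiber_words n y)"
    by (simp add: fiber_words_def finite_Bn_X)
  have "E \<subseteq> (\<Union>u\<in>fiber_words n y. E \<inter> cyl u)"
    using word_E(2) word_in_cyl by blast
  moreover have "finite (E \<inter> cyl u)" if "u \<in> fiber_words n y" for u
    by (rule card_ge_0_finite) (simp add: single[OF that])
  ultimately have "finite E"
    using fin_fiber by (meson finite_UN_I finite_subset)
  then have "(\<Sum>x\<in>E. f n x) = (\<Sum>u\<in>fiber_words n y. \<Sum>x\<in>{x \<in> E. word n x = u}. f n x)"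
    using fin_fiber word_E(2) by (intro sum.group[symmetric]) auto
  also have "\<dots> \<le> (\<Sum>u\<in>fiber_words n y. M * cyl_weight u)"
  proof (rule sum_mono)
    fix u assume u: "u \<in> fiber_words n y"
    then obtain x where x: "E \<inter> cyl u = {x}"
      using single card_1_singletonE by blast
    then have "x \<in> X" "word n x = u"
      using word_E(1) fiber_cyl[OF u] by auto
    then have "f n x \<le> M * cyl_weight u"
      using M by blast
    then show "(\<Sum>x\<in>{x \<in> E. word n x = u}. f n x) \<le> M * cyl_weight u"
      using x fiber_cyl[OF u] by simp
  qed
  finally show ?thesis
    by (simp add: fiber_weight_def sum_distrib_left)
qed

lemma cyl_reps_in_En_sets:
  "cyl_rep X ` fiber_words n y \<in> En_sets X \<pi> n y"
  "(\<Sum>x\<in>cyl_rep X ` fiber_words n y. f n x) = fiber_weight n y"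
proof -
  have in_Bn: "u \<in> Bn n X" if "u \<in> fiber_words n y" for u
    using that by (simp add: fiber_words_def)
  have rep_cyl: "cyl_rep X u \<in> X \<inter> cyl u" if "u \<in> fiber_words n y" for u
    using cyl_rep(2)[OF in_Bn[OF that]] cyl_rep(1)[OF in_Bn[OF that]] by blast
  have inj: "inj_on (cyl_rep X) (fiber_words n y)"
    by (rule inj_onI) (metis in_Bn cyl_rep(3))
  have "cyl_rep X ` fiber_words n y \<inter> cyl u = {cyl_rep X u}" if u: "u \<in> fiber_words n y" for u
  proof
    show "{cyl_rep X u} \<subseteq> cyl_rep X ` fiber_words n y \<inter> cyl u"
      using u rep_cyl by blast
    show "cyl_rep X ` fiber_words n y \<inter> cyl u \<subseteq> {cyl_rep X u}"
    proof clarify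
      fix u' assume u': "u' \<in> fiber_words n y" and "cyl_rep X u' \<in> cyl u"
      then have "word n (cyl_rep X u') = u"
        using word_eq_if_in_cyl Bn_length[OF in_Bn[OF u]] by metis
      then show "cyl_rep X u' = cyl_rep X u"
        using cyl_rep(3)[OF in_Bn[OF u']] by simp
    qed
  qed
  then show "cyl_rep X ` fiber_words n y \<in> En_sets X \<pi> n y"
    unfolding En_sets_def En_index_eq using rep_cyl in_fiber_words_iff by auto
  have "f n (cyl_rep X u) = cyl_weight u" if "u \<in> fiber_words n y" for u
    using cyl_weight_rep[OF in_Bn[OF that]] by simp
  then show "(\<Sum>x\<in>cyl_rep X ` fiber_words n y. f n x) = fiber_weight n y"
    by (simp add: sum.reindex[OF inj] fiber_weight_def)
qed

lemma gfun_fiber_weight_bounds: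
  obtains M where "M \<ge> 1"
    and "\<And>n y. n \<ge> 1 \<Longrightarrow> fiber_weight n y \<le> gfun X \<pi> f n y"
    and "\<And>n y. n \<ge> 1 \<Longrightarrow> gfun X \<pi> f n y \<le> M * fiber_weight n y"
proof -
  obtain M where "M \<ge> 1" and M: "\<And>n x. n \<ge> 1 \<Longrightarrow> x \<in> X \<Longrightarrow> f n x \<le> M * cyl_weight (word n x)"
    using cyl_weight_distortion by metis
  have le: "(\<Sum>x\<in>E. f n x) \<le> M * fiber_weight n y" if "n \<ge> 1" "E \<in> En_sets X \<pi> n y" for n y E
    using En_set_sum_le[OF that(2) M[OF that(1)]] .
  have "fiber_weight n y \<le> gfun X \<pi> f n y" if "n \<ge> 1" for n y
    unfolding gfun_def using cyl_reps_in_En_sets[of n y] le[OF that]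
    by (metis (no_types, lifting) bdd_aboveI2 cSUP_upper)
  moreover have "gfun X \<pi> f n y \<le> M * fiber_weight n y" if "n \<ge> 1" for n y
    unfolding gfun_def using cyl_reps_in_En_sets(1)[of n y] le[OF that]
    by (intro cSUP_least) auto
  ultimately show ?thesis
    using that \<open>M \<ge> 1\<close> by blast
qed

lemma sum_fiber_weight: "(\<Sum>w\<in>Bn n Y. fiber_weight n (cyl_rep Y w)) = partition_sum n"
proof -
  have "(\<Sum>w\<in>Bn n Y. fiber_weight n (cyl_rep Y w))
        = (\<Sum>w\<in>Bn n Y. \<Sum>u\<in>{u \<in> Bn n X. map \<phi> u = w}. cyl_weight u)"
    using cyl_rep(3) by (simp add: fiber_weight_def fiber_words_def)
  also have "\<dots> = partition_sum n"
    unfolding partition_sum_def using Bn_factor finite_Bn_X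
    by (intro sum.group) auto
  finally show ?thesis .
qed

lemma S_sum_eq: "S_sum X Y \<pi> f n = (\<Sum>w\<in>Bn n Y. gtilde X \<pi> f n (cyl_rep Y w))"
  unfolding S_sum_def coef_a_def cyl_rep_def by (intro sum.cong refl) (simp add: Bn_length)

lemma gtilde_nonneg: "n \<ge> 1 \<Longrightarrow> gtilde X \<pi> f n y \<ge> 0"
proof -
  assume "n \<ge> 1"
  obtain M where "\<And>n y. n \<ge> 1 \<Longrightarrow> fiber_weight n y \<le> gfun X \<pi> f n y"
    using gfun_fiber_weight_bounds by metis
  moreover have "fiber_weight n y \<ge> 0"
    unfolding fiber_weight_def fiber_words_def using \<open>n \<ge> 1\<close>
    by (intro sum_nonneg) (auto intro: cyl_weight_nonneg)
  ultimately have "gfun X \<pi> f n y \<ge> 0"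
    using \<open>n \<ge> 1\<close> by (meson order.trans)
  then show ?thesis
    by (simp add: gtilde_def)
qed

lemma S_sum_exp_bounds:
  assumes "has_specification X"
  shows "\<exists>Q c1 c2. c1 > 0 \<and> c2 > 0 \<and> (\<forall>n\<ge>1.
           c1 * exp (real n * Q) \<le> S_sum X Y \<pi> f n \<and> S_sum X Y \<pi> f n \<le> c2 * exp (real n * Q))"
proof -
  obtain Q A B where "A > 0" "B > 0"
    and Z: "\<And>n. n \<ge> 1 \<Longrightarrow> B * partition_sum n \<le> exp (real n * Q) \<and> exp (real n * Q) \<le> A * partition_sum n"
    using partition_sum_exp_bounds[OF assms] by blast
  obtain M where "M \<ge> 1"
    and g: "\<And>n y. n \<ge> 1 \<Longrightarrow> fiber_weight n y \<le> gfun X \<pi> f n y \<and> gfun X \<pi> f n y \<le> M * fiber_weight n y"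
    using gfun_fiber_weight_bounds by metis
  define P where "P = pressure X f"
  have "(1 / A) * exp (real n * (Q - P)) \<le> S_sum X Y \<pi> f n \<and> S_sum X Y \<pi> f n \<le> (M / B) * exp (real n * (Q - P))"
    if "n \<ge> 1" for n
  proof -
    define e where "e = exp (- real n * P)"
    have S: "S_sum X Y \<pi> f n = e * (\<Sum>w\<in>Bn n Y. gfun X \<pi> f n (cyl_rep Y w))"
      by (simp add: S_sum_eq gtilde_def e_def P_def sum_distrib_left mult.commute)
    have lower: "e * partition_sum n \<le> S_sum X Y \<pi> f n"
      unfolding S sum_fiber_weight[symmetric] e_def using g[OF that] by (intro mult_left_mono sum_mono) auto
    have upper: "S_sum X Y \<pi> f n \<le> M * (e * partition_sum n)"
      unfolding S sum_fiber_weight[symmetric] e_def using g[OF that]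
      by (simp add: sum_distrib_left sum_mono mult.left_commute)
    have "exp (real n * (Q - P)) = e * exp (real n * Q)"
      by (simp add: e_def algebra_simps flip: exp_add)
    have lower_exp: "e * exp (real n * Q) \<le> A * S_sum X Y \<pi> f n"
    proof -
      have "e * exp (real n * Q) \<le> e * (A * partition_sum n)"
        using Z[OF that] by (simp add: e_def)
      also have "\<dots> \<le> A * S_sum X Y \<pi> f n"
        using mult_left_mono[OF lower, of A] \<open>A > 0\<close> by (simp add: ac_simps)
      finally show ?thesis .
    qed
    have upper_exp: "B * S_sum X Y \<pi> f n \<le> M * (e * exp (real n * Q))"
    proof -
      have "B * S_sum X Y \<pi> f n \<le> M * (B * (e * partition_sum n))"
        using mult_left_mono[OF upper, of B] \<open>B > 0\<close> by (simp add: ac_simps)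
      also have "\<dots> \<le> M * (e * exp (real n * Q))"
        using Z[OF that] \<open>M \<ge> 1\<close> by (intro mult_left_mono) (simp_all add: e_def)
      finally show ?thesis .
    qed
    show ?thesis
      using lower_exp upper_exp \<open>exp (real n * (Q - P)) = e * exp (real n * Q)\<close> \<open>A > 0\<close> \<open>B > 0\<close>
      by (simp add: field_simps)
  qed
  then show ?thesis
    using \<open>A > 0\<close> \<open>B > 0\<close> \<open>M \<ge> 1\<close> by (intro exI[of _ "Q - P"] exI[of _ "1 / A"] exI[of _ "M / B"]) auto
qed

end

theorem lemma3p8:
  fixes k l :: nat and X Y :: "(nat \<Rightarrow> nat) set"
    and \<pi> :: "(nat \<Rightarrow> nat) \<Rightarrow> (nat \<Rightarrow> nat)"
    and f :: "nat \<Rightarrow> (nat \<Rightarrow> nat) \<Rightarrow> real"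
  assumes "subshift k X" and "subshift l Y"
    and "one_block_factor X Y \<pi>"
    and "has_specification X"
    and "almost_additive X f" and "bounded_variation X f"
  shows "\<exists>K1 K2. K1 > 0 \<and> K2 > 0 \<and> (\<forall>n\<ge>1.
           K1 \<le> exp (real n * pressure Y (gtilde X \<pi> f)) / S_sum X Y \<pi> f n \<and>
           exp (real n * pressure Y (gtilde X \<pi> f)) / S_sum X Y \<pi> f n \<le> K2)"
proof -
  obtain \<phi> where "\<pi> ` X = Y" "\<forall>x\<in>X. \<pi> x = \<phi> \<circ> x"
    using assms(3) unfolding one_block_factor_def by blast
  then interpret almost_additive_factor k X f Y \<pi> \<phi>
    using assms(1,5,6) by unfold_locales auto
  obtain Q c1 c2 where "c1 > 0" "c2 > 0" and S: "\<And>n. n \<ge> 1 \<Longrightarrow>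
      c1 * exp (real n * Q) \<le> S_sum X Y \<pi> f n \<and> S_sum X Y \<pi> f n \<le> c2 * exp (real n * Q)"
    using S_sum_exp_bounds[OF assms(4)] by blast
  have "pressure Y (gtilde X \<pi> f) = Q"
    using pressure_eq_of_exp_bounds[where g = "gtilde X \<pi> f", OF assms(2) gtilde_word_local gtilde_nonneg \<open>c1 > 0\<close>] S
    unfolding S_sum_eq by blast
  moreover have "1 / c2 \<le> exp (real n * Q) / S_sum X Y \<pi> f n \<and> exp (real n * Q) / S_sum X Y \<pi> f n \<le> 1 / c1"
    if "n \<ge> 1" for n
  proof -
    have "0 < c1 * exp (real n * Q)"
      using \<open>c1 > 0\<close> by simp
    then have "S_sum X Y \<pi> f n > 0"
      using S[OF that] by linarith
    then show ?thesis
      using S[OF that] \<open>c1 > 0\<close> \<open>c2 > 0\<close> by (simp add: field_simps)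
  qed
  ultimately show ?thesis
    using \<open>c1 > 0\<close> \<open>c2 > 0\<close> by (intro exI[of _ "1 / c2"] exI[of _ "1 / c1"]) auto
qed

end
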